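(* Let $q$ be a prime power, $\mathrm{F}$ the $q$-power Frobenius on $\mathcal{P}_5$ over $\overline{\mathbb{F}}_q$, and $\sigma\in S_5$ a 5-cycle acting on $\mathcal{P}_5$ by permuting the five points. Then the number of points of $\mathcal{P}_5(\overline{\mathbb{F}}_q)$ fixed by $\mathrm{F}\sigma$ is $$\left|\mathcal{P}_5^{\mathrm{F}\sigma}\right|=q^2+1.$$
   Context: $\mathcal{P}_5$ is the moduli space of ordered 5-tuples of points in $\mathbb{P}^2$ in general position (pairwise distinct, no three collinear) modulo $\mathrm{PGL}_3$, defined over $\mathbb{Z}$ and considered over $\overline{\mathbb{F}}_q$; $S_5$ acts by permuting the points, and $\mathrm{F}\sigma$ denotes the composition of $\sigma$ with the $q$-power Frobenius. *)

theory Defs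
  imports "HOL-Analysis.Analysis" "HOL-Computational_Algebra.Polynomial"
    "HOL-Library.Numeral_Type" "HOL-Combinatorics.Cycles"
begin

text \<open>A point of P^2(k) is represented by a nonzero vector in k^3; an ordered
  5-tuple of points is an element of k^3^5 (row i = homogeneous coordinates of point i).\<close>

definition rows3 :: "'k^3^5 \<Rightarrow> 5 \<Rightarrow> 5 \<Rightarrow> 5 \<Rightarrow> 'k^3^3" where
  "rows3 v i j l = (\<chi> r. if r = 1 then v$i else if r = 2 then v$j else v$l)"

text \<open>General position: points nonzero, pairwise distinct in P^2 and no three collinear.
  (Pairwise distinctness and nonzeroness follow from the determinant condition, but
  we state them explicitly.)\<close>
definition gen_pos :: "('k::field)^3^5 \<Rightarrow> bool" where
  "gen_pos v \<longleftrightarrow> (\<forall>i. v$i \<noteq> 0)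
     \<and> (\<forall>i j. i \<noteq> j \<longrightarrow> (\<forall>c. v$i \<noteq> c *s v$j))
     \<and> (\<forall>i j l. i \<noteq> j \<and> j \<noteq> l \<and> i \<noteq> l \<longrightarrow> det (rows3 v i j l) \<noteq> 0)"

definition configs :: "(('k::field)^3^5) set" where
  "configs = {v. gen_pos v}"

definition pgl_rel :: "((('k::field)^3^5) \<times> ('k^3^5)) set" where
  "pgl_rel = {(v, w). v \<in> configs \<and> w \<in> configs \<and>
      (\<exists>(A::'k^3^3) (c::5 \<Rightarrow> 'k). invertible A \<and> (\<forall>i. c i \<noteq> 0) \<and>
         (\<forall>i. w$i = c i *s (A *v (v$i))))}"

definition P5 :: "(('k::field)^3^5) set set" where
  "P5 = configs // pgl_rel"

definition frob_perm :: "nat \<Rightarrow> (5 \<Rightarrow> 5) \<Rightarrow> ('k::field)^3^5 \<Rightarrow> 'k^3^5" where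
  "frob_perm q \<sigma> v = (\<chi> i. \<chi> r. (v $ (\<sigma> i) $ r) ^ q)"

definition P5_fixed :: "nat \<Rightarrow> (5 \<Rightarrow> 5) \<Rightarrow> (('k::field)^3^5) set set" where
  "P5_fixed q \<sigma> = {X \<in> P5. \<forall>v\<in>X. frob_perm q \<sigma> v \<in> X}"

end

theory Submission
  imports Defs "HOL-Computational_Algebra.Primes"
begin

text \<open>The first four points of a configuration in general position form a projective
  frame, so up to projective equivalence every configuration is uniquely
  \<open>e1, e2, e3, (1,1,1), (1,s,t)\<close>, the points numbered along the 5-cycle. Comparing this
  normal form with its image under \<open>F\<sigma>\<close> shows that its class is \<open>F\<sigma>\<close>-fixed iff
  \<open>t = 1 - s^q\<close> and \<open>s^(q^2+1) + s^q - 1 = 0\<close>. In characteristic \<open>p\<close> the derivative of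
  this polynomial is \<open>s^(q^2)\<close>, which does not vanish at its roots, so an algebraically
  closed field contains exactly \<open>q^2 + 1\<close> of them.\<close>

section \<open>Polynomials with simple roots\<close>

lemma card_roots_eq_degree:
  fixes f :: "'k::field poly"
  assumes alg_closed: "\<forall>g :: 'k poly. degree g > 0 \<longrightarrow> (\<exists>x. poly g x = 0)"
    and "f \<noteq> 0" and "\<forall>a. poly f a = 0 \<longrightarrow> poly (pderiv f) a \<noteq> 0"
  shows "card {a. poly f a = 0} = degree f"
  using assms(2,3)
proof (induction "degree f" arbitrary: f)
  case 0
  then obtain c where "f = [:c:]" by (metis degree_eq_zeroE)
  with 0 show ?case by auto
next
  case (Suc d)
  then obtain a where a: "poly f a = 0" using alg_closed by (metis zero_less_Suc)
  then obtain g where fg: "f = [:-a,1:] * g" by (metis dvdE poly_eq_0_iff_dvd)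
  have "g \<noteq> 0" using Suc.prems fg by auto
  then have "degree f = Suc (degree g)"
    using fg degree_mult_eq[of "[:-a,1:]" g] by simp
  then have deg_g: "degree g = d" using Suc.hyps(2) by simp
  have pderiv_f: "pderiv f = g + [:-a,1:] * pderiv g"
    unfolding fg pderiv_mult by (simp add: pderiv_pCons algebra_simps)
  have ga: "poly g a \<noteq> 0" using Suc.prems(2) a pderiv_f by auto
  have "\<forall>b. poly g b = 0 \<longrightarrow> poly (pderiv g) b \<noteq> 0"
    using Suc.prems(2) fg pderiv_f by auto
  then have "card {b. poly g b = 0} = d"
    using Suc.hyps(1)[of g] deg_g \<open>g \<noteq> 0\<close> by simp
  moreover have "{b. poly f b = 0} = insert a {b. poly g b = 0}" using fg by auto
  moreover have "finite {b. poly g b = 0}" using \<open>g \<noteq> 0\<close> by (rule poly_roots_finite)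
  ultimately show ?case using ga Suc.hyps(2) by simp
qed

locale char_power =
  fixes field :: "'k::field itself" and q :: nat
  assumes prime_char: "prime CHAR('k)"
    and power_of_char: "\<exists>n. q = CHAR('k) ^ n \<and> n \<ge> 1"
begin

lemma q_pos: "q > 0"
  using power_of_char prime_char by (auto simp: prime_gt_0_nat)

lemma of_nat_q: "of_nat q = (0::'k)"
  using power_of_char by (auto simp: of_nat_eq_0_iff_char_dvd)

lemma frob_add: "(x + y :: 'k) ^ q = x ^ q + y ^ q"
  using power_of_char prime_char freshmans_dream' by blast

lemma frob_diff: "(x - y :: 'k) ^ q = x ^ q - y ^ q"
proof -
  have "x ^ q = ((x - y) + y) ^ q" by simp
  also have "\<dots> = (x - y) ^ q + y ^ q" by (rule frob_add)
  finally show ?thesis by (simp add: algebra_simps)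
qed

definition frob_roots :: "'k set" where
  "frob_roots = {y. y ^ (q\<^sup>2 + 1) + y ^ q - 1 = 0}"

lemma card_frob_roots:
  assumes alg_closed: "\<forall>g :: 'k poly. degree g > 0 \<longrightarrow> (\<exists>x. poly g x = 0)"
  shows "card frob_roots = q\<^sup>2 + 1"
proof -
  define f :: "'k poly" where "f = monom 1 (q\<^sup>2 + 1) + (monom 1 q - 1)"
  have poly_f: "poly f y = y ^ (q\<^sup>2 + 1) + y ^ q - 1" for y
    by (simp add: f_def poly_monom)
  have "degree (monom (1::'k) q - 1) \<le> q"
    by (rule degree_diff_le) (simp_all add: degree_monom_le)
  also have "q < q\<^sup>2 + 1" by (simp add: power2_eq_square le_square le_imp_less_Suc)
  finally have deg_f: "degree f = q\<^sup>2 + 1"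
    unfolding f_def by (subst degree_add_eq_left) (simp_all add: degree_monom_eq)
  have "of_nat (q\<^sup>2 + 1) = (1::'k)" using of_nat_q by simp
  then have "pderiv f = monom 1 (q\<^sup>2)"
    by (simp add: f_def pderiv_add pderiv_diff pderiv_monom of_nat_q)
  \<comment> \<open>\<open>0\<close> is not a root, and the derivative \<open>y^(q^2)\<close> vanishes only at \<open>0\<close>.\<close>
  then have "\<forall>a. poly f a = 0 \<longrightarrow> poly (pderiv f) a \<noteq> 0"
    using q_pos by (auto simp: poly_f poly_monom zero_power)
  moreover have "f \<noteq> 0" using deg_f by auto
  ultimately have "card {y. poly f y = 0} = q\<^sup>2 + 1"
    using card_roots_eq_degree[OF alg_closed] deg_f by simp
  then show ?thesis by (simp only: poly_f frob_roots_def)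
qed

end

section \<open>Configurations of five points in general position\<close>

definition det3 :: "'k::comm_ring_1^3 \<Rightarrow> 'k^3 \<Rightarrow> 'k^3 \<Rightarrow> 'k" where
  "det3 x y z = x$1 * y$2 * z$3 + x$2 * y$3 * z$1 + x$3 * y$1 * z$2
     - x$1 * y$3 * z$2 - x$2 * y$1 * z$3 - x$3 * y$2 * z$1"

lemma det_rows3: "det (rows3 v i j l) = det3 (v$i) (v$j) (v$l)"
  by (simp add: rows3_def det_3 det3_def)

lemma matrix_vector_mult_3:
  "((A::'k::comm_ring_1^3^3) *v x) $ i = A$i$1 * x$1 + A$i$2 * x$2 + A$i$3 * x$3"
  by (simp add: matrix_vector_mult_def sum_3)

lemma vec3_eq_iff: "(u::'k^3) = v \<longleftrightarrow> u$1 = v$1 \<and> u$2 = v$2 \<and> u$3 = v$3"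
  by (simp add: vec_eq_iff forall_3)

lemma det3_scale_matrix_vector_mult:
  "det3 (c1 *s (A *v u)) (c2 *s (A *v v)) (c3 *s (A *v w))
     = c1 * c2 * c3 * det (A::'k::comm_ring_1^3^3) * det3 u v w"
  by (simp add: det3_def det_3 matrix_vector_mult_3 algebra_simps)

definition cross_prod :: "'k::comm_ring_1^3 \<Rightarrow> 'k^3 \<Rightarrow> 'k^3" where
  "cross_prod x y = vector [x$2 * y$3 - x$3 * y$2, x$3 * y$1 - x$1 * y$3, x$1 * y$2 - x$2 * y$1]"

lemma det3_cross_prod: "det3 (cross_prod y z) (cross_prod z x) (cross_prod x y) = (det3 x y z)\<^sup>2"
  by (simp add: det3_def cross_prod_def power2_eq_square algebra_simps)

lemma det3_repeated: "det3 x x z = 0" "det3 x y x = 0" "det3 x y y = 0"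
  by (simp_all add: det3_def algebra_simps)

lemma det_vector_scale:
  "det (vector [p *s x, r *s y, w *s z] :: 'k::comm_ring_1^3^3) = p * r * w * det3 x y z"
  by (simp add: det_3 det3_def algebra_simps)

lemma ex_third_point: "\<exists>l::5. l \<noteq> i \<and> l \<noteq> j"
proof (rule ccontr)
  assume "\<not> ?thesis"
  then have "card (UNIV::5 set) \<le> card {i, j}" by (intro card_mono) auto
  also have "\<dots> \<le> 2" by (simp add: card_insert_le_m1)
  finally show False by simp
qed

lemma gen_pos_iff_det3:
  "gen_pos (v::'k::field^3^5) \<longleftrightarrow>
     (\<forall>i j l. i \<noteq> j \<and> j \<noteq> l \<and> i \<noteq> l \<longrightarrow> det3 (v$i) (v$j) (v$l) \<noteq> 0)"
    (is "_ \<longleftrightarrow> ?dets")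
proof
  assume ?dets
  have "v$i \<noteq> 0" for i
  proof
    assume "v$i = 0"
    obtain j where "j \<noteq> i" using ex_third_point[of i i] by auto
    moreover obtain l where "l \<noteq> i" "l \<noteq> j" using ex_third_point[of i j] by auto
    ultimately show False using \<open>?dets\<close> \<open>v$i = 0\<close> by (force simp: det3_def)
  qed
  moreover have "v$i \<noteq> c *s v$j" if "i \<noteq> j" for i j c
  proof
    assume "v$i = c *s v$j"
    obtain l where "l \<noteq> i" "l \<noteq> j" using ex_third_point[of i j] by auto
    then show False using \<open>?dets\<close> \<open>v$i = c *s v$j\<close> that by (force simp: det3_def algebra_simps)
  qed
  ultimately show "gen_pos v" using \<open>?dets\<close> unfolding gen_pos_def det_rows3 by blast
qed (auto simp: gen_pos_def det_rows3)

definition proj_equiv :: "('k::field)^3^5 \<Rightarrow> 'k^3^5 \<Rightarrow> bool" where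
  "proj_equiv v w \<longleftrightarrow> (\<exists>(A::'k^3^3) (c::5 \<Rightarrow> 'k). invertible A \<and> (\<forall>i. c i \<noteq> 0) \<and>
     (\<forall>i. w$i = c i *s (A *v (v$i))))"

lemma gen_pos_proj_equiv:
  assumes "gen_pos v" "proj_equiv v w"
  shows "gen_pos w"
proof -
  obtain A c where "invertible A" "\<forall>i. c i \<noteq> 0" "\<forall>i. w$i = c i *s (A *v v$i)"
    using assms(2) unfolding proj_equiv_def by blast
  moreover have "det A \<noteq> 0" using \<open>invertible A\<close> invertible_det_nz by blast
  ultimately show ?thesis
    using assms(1) unfolding gen_pos_iff_det3 by (simp add: det3_scale_matrix_vector_mult)
qed

lemma pgl_rel_iff: "(v, w) \<in> pgl_rel \<longleftrightarrow> gen_pos v \<and> proj_equiv v w"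
  unfolding pgl_rel_def proj_equiv_def configs_def
  using gen_pos_proj_equiv[unfolded proj_equiv_def] by blast

lemma matrix_vector_mult_scale: "(A::'k::comm_ring_1^3^3) *v (c *s x) = c *s (A *v x)"
  by (simp add: vec3_eq_iff matrix_vector_mult_3 algebra_simps)

lemma equiv_pgl_rel: "equiv configs (pgl_rel :: ((('k::field)^3^5) \<times> _) set)"
proof (rule equivI)
  show "pgl_rel \<subseteq> configs \<times> (configs :: ('k^3^5) set)" unfolding pgl_rel_def by auto
next
  have "proj_equiv x x" for x :: "'k^3^5"
    unfolding proj_equiv_def
    by (rule exI[of _ "mat 1"], rule exI[of _ "\<lambda>_. 1"]) (simp add: invertible_det_nz det_I)
  then show "refl_on configs (pgl_rel :: (('k^3^5) \<times> _) set)"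
    by (auto intro: refl_onI simp: pgl_rel_iff configs_def)
next
  show "sym (pgl_rel :: (('k^3^5) \<times> _) set)"
  proof (rule symI)
    fix v w :: "'k^3^5" assume "(v, w) \<in> pgl_rel"
    then obtain A c where vw: "v \<in> configs" "w \<in> configs" "invertible A" "\<forall>i. c i \<noteq> 0"
        "\<forall>i. w$i = c i *s (A *v (v$i))" unfolding pgl_rel_def by auto
    obtain B where B: "B ** A = mat 1" using vw(3) invertible_left_inverse by blast
    then have "det B * det A = 1" by (metis det_mul det_I)
    then have "invertible B" using invertible_det_nz by force
    moreover have "v$i = inverse (c i) *s (B *v (w$i))" for i
      using vw(4,5) B by (simp add: matrix_vector_mult_scale matrix_vector_mul_assoc)
    ultimately show "(w, v) \<in> pgl_rel" unfolding pgl_rel_def using vw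
      by (auto intro!: exI[of _ B] exI[of _ "\<lambda>i. inverse (c i)"])
  qed
next
  show "trans (pgl_rel :: (('k^3^5) \<times> _) set)"
  proof (rule transI)
    fix u v w :: "'k^3^5" assume "(u, v) \<in> pgl_rel" "(v, w) \<in> pgl_rel"
    then obtain A c B d where h: "u \<in> configs" "w \<in> configs" "invertible A" "\<forall>i. c i \<noteq> 0"
        "\<forall>i. v$i = c i *s (A *v (u$i))" "invertible B" "\<forall>i. d i \<noteq> 0"
        "\<forall>i. w$i = d i *s (B *v (v$i))" unfolding pgl_rel_def by auto
    have "w$i = (d i * c i) *s ((B ** A) *v (u$i))" for i
      using h(5,8) by (simp add: matrix_vector_mult_scale matrix_vector_mul_assoc)
    moreover have "invertible (B ** A)" using h(3,6) invertible_mult by blast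
    ultimately show "(u, w) \<in> pgl_rel" unfolding pgl_rel_def using h
      by (auto intro!: exI[of _ "B ** A"] exI[of _ "\<lambda>i. d i * c i"])
  qed
qed

lemma equiv_class_closed_iff:
  assumes "equiv A r" "x \<in> A" and respects: "\<And>v w. (v, w) \<in> r \<Longrightarrow> (F v, F w) \<in> r"
  shows "(\<forall>w\<in>r``{x}. F w \<in> r``{x}) \<longleftrightarrow> (x, F x) \<in> r"
proof
  assume "\<forall>w\<in>r``{x}. F w \<in> r``{x}"
  then show "(x, F x) \<in> r" using equiv_class_self[OF assms(1,2)] by blast
next
  assume "(x, F x) \<in> r"
  moreover have "trans r" using assms(1) by (simp add: equiv_def)
  ultimately show "\<forall>w\<in>r``{x}. F w \<in> r``{x}" using respects by (blast dest: transD)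
qed

definition frob_vec :: "nat \<Rightarrow> 'k::field^3 \<Rightarrow> 'k^3" where
  "frob_vec q x = (\<chi> r. (x$r) ^ q)"

definition frob_mat :: "nat \<Rightarrow> 'k::field^3^3 \<Rightarrow> 'k^3^3" where
  "frob_mat q A = (\<chi> i j. (A$i$j) ^ q)"

lemma frob_vec_nth [simp]: "frob_vec q x $ r = (x$r) ^ q"
  by (simp add: frob_vec_def)

lemma frob_mat_nth [simp]: "frob_mat q A $ i $ j = (A$i$j) ^ q"
  by (simp add: frob_mat_def)

lemma frob_perm_nth: "frob_perm q \<sigma> v $ i = frob_vec q (v $ \<sigma> i)"
  by (simp add: frob_perm_def frob_vec_def)

lemma frob_vec_vector: "frob_vec q (vector [x, y, z] :: 'k::field^3) = vector [x^q, y^q, z^q]"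
  by (simp add: vec3_eq_iff)

context char_power
begin

lemma frob_vec_scale_mult:
  "frob_vec q (c *s ((A::'k^3^3) *v x)) = c ^ q *s (frob_mat q A *v frob_vec q x)"
  by (simp add: vec3_eq_iff matrix_vector_mult_3 frob_add power_mult_distrib)

lemma det_frob_mat: "det (frob_mat q (A::'k^3^3)) = det A ^ q"
  by (simp add: det_3 frob_add frob_diff power_mult_distrib)

lemma det3_frob_vec: "det3 (frob_vec q x) (frob_vec q y) (frob_vec q z) = (det3 x y z :: 'k) ^ q"
  by (simp only: det3_def frob_vec_nth frob_add frob_diff power_mult_distrib)

lemma gen_pos_frob_perm:
  assumes "inj \<sigma>" and "gen_pos (v::'k^3^5)"
  shows "gen_pos (frob_perm q \<sigma> v)"
  using assms q_pos
  unfolding gen_pos_iff_det3 frob_perm_nth det3_frob_vec by (simp add: inj_eq)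

lemma pgl_rel_frob_perm:
  assumes "inj \<sigma>" and "(v, w) \<in> (pgl_rel :: (('k^3^5) \<times> _) set)"
  shows "(frob_perm q \<sigma> v, frob_perm q \<sigma> w) \<in> pgl_rel"
proof -
  obtain A c where vw: "gen_pos v" "invertible A" "\<forall>i. c i \<noteq> 0"
      "\<forall>i. w$i = c i *s (A *v (v$i))"
    using assms(2) unfolding pgl_rel_iff proj_equiv_def by auto
  have "invertible (frob_mat q A)"
    using vw(2) q_pos by (simp add: invertible_det_nz det_frob_mat)
  moreover have "frob_perm q \<sigma> w $ i = c (\<sigma> i) ^ q *s (frob_mat q A *v (frob_perm q \<sigma> v $ i))"
    for i using vw(4) by (simp add: frob_perm_nth frob_vec_scale_mult)
  ultimately have "proj_equiv (frob_perm q \<sigma> v) (frob_perm q \<sigma> w)"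
    unfolding proj_equiv_def using vw(3) q_pos
    by (intro exI[of _ "frob_mat q A"] exI[of _ "\<lambda>i. c (\<sigma> i) ^ q"]) auto
  then show ?thesis using gen_pos_frob_perm[OF assms(1) vw(1)] by (simp add: pgl_rel_iff)
qed

lemma P5_fixed_eq:
  assumes "inj \<sigma>"
  shows "(P5_fixed q \<sigma> :: ('k^3^5) set set)
           = {pgl_rel``{v} | v. v \<in> configs \<and> (v, frob_perm q \<sigma> v) \<in> pgl_rel}"
proof -
  have "(\<forall>w\<in>pgl_rel``{v}. frob_perm q \<sigma> w \<in> pgl_rel``{v}) \<longleftrightarrow> (v, frob_perm q \<sigma> v) \<in> pgl_rel"
    if "v \<in> configs" for v :: "'k^3^5"
    using equiv_class_closed_iff[OF equiv_pgl_rel that pgl_rel_frob_perm[OF assms]] .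
  then show ?thesis unfolding P5_fixed_def P5_def by (auto elim!: quotientE intro: quotientI)
qed

end

section \<open>Normal forms with respect to a 5-cycle\<close>

locale five_cycle =
  fixes a b c d e :: 5 and \<sigma> :: "5 \<Rightarrow> 5"
  assumes distinct: "distinct [a, b, c, d, e]"
    and cycle: "\<sigma> a = b" "\<sigma> b = c" "\<sigma> c = d" "\<sigma> d = e" "\<sigma> e = a"
    and exhaust: "\<And>i. i = a \<or> i = b \<or> i = c \<or> i = d \<or> i = e"
begin

lemma points_neq:
  "a \<noteq> b" "a \<noteq> c" "a \<noteq> d" "a \<noteq> e" "b \<noteq> c" "b \<noteq> d" "b \<noteq> e" "c \<noteq> d" "c \<noteq> e" "d \<noteq> e"
  "b \<noteq> a" "c \<noteq> a" "d \<noteq> a" "e \<noteq> a" "c \<noteq> b" "d \<noteq> b" "e \<noteq> b" "d \<noteq> c" "e \<noteq> c" "e \<noteq> d"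
  using distinct by auto

lemma inj_\<sigma>: "inj \<sigma>"
proof (rule injI)
  fix i j assume "\<sigma> i = \<sigma> j"
  then show "i = j" using exhaust[of i] exhaust[of j] cycle points_neq by auto
qed

definition std_config :: "'k::field \<Rightarrow> 'k \<Rightarrow> 'k^3^5" where
  "std_config s t = (\<chi> i. if i = a then vector [1,0,0] else if i = b then vector [0,1,0]
     else if i = c then vector [0,0,1] else if i = d then vector [1,1,1] else vector [1,s,t])"

lemma std_config_nth:
  "std_config s t $ a = vector [1,0,0]" "std_config s t $ b = vector [0,1,0]"
  "std_config s t $ c = vector [0,0,1]" "std_config s t $ d = vector [1,1,1]"
  "std_config s t $ e = vector [1,s,t]"
  by (simp_all add: std_config_def points_neq)

lemma gen_pos_std_config:
  assumes "s \<noteq> 0" "t \<noteq> 0" "s \<noteq> 1" "t \<noteq> 1" "s \<noteq> (t::'k::field)"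
  shows "gen_pos (std_config s t)"
  unfolding gen_pos_iff_det3
proof (intro allI impI)
  fix i j l :: 5 assume "i \<noteq> j \<and> j \<noteq> l \<and> i \<noteq> l"
  moreover have "s - t \<noteq> 0" "t - s \<noteq> 0" "s - 1 \<noteq> 0" "t - 1 \<noteq> 0" "1 - s \<noteq> 0" "1 - t \<noteq> 0"
    using assms by auto
  ultimately show "det3 (std_config s t $ i) (std_config s t $ j) (std_config s t $ l) \<noteq> 0"
    using exhaust[of i] exhaust[of j] exhaust[of l] assms
    by (elim disjE) (simp_all add: std_config_nth det3_def)
qed

lemma std_config_unique:
  assumes "proj_equiv (std_config s t) (std_config s' t' :: 'k::field^3^5)"
  shows "s' = s \<and> t' = t"
proof -
  obtain A \<mu> where \<mu>: "\<forall>i. \<mu> i \<noteq> (0::'k)"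
    and Ac: "\<forall>i. std_config s' t' $ i = \<mu> i *s (A *v (std_config s t $ i))"
    using assms unfolding proj_equiv_def by blast
  note eqs = std_config_nth vec3_eq_iff matrix_vector_mult_3
  have "1 = \<mu> a * A$1$1" "0 = \<mu> a * A$2$1" "0 = \<mu> a * A$3$1"
       "0 = \<mu> b * A$1$2" "1 = \<mu> b * A$2$2" "0 = \<mu> b * A$3$2"
       "0 = \<mu> c * A$1$3" "0 = \<mu> c * A$2$3" "1 = \<mu> c * A$3$3"
    using Ac[rule_format, of a] Ac[rule_format, of b] Ac[rule_format, of c] by (simp_all add: eqs)
  then have diag: "A$2$1 = 0" "A$3$1 = 0" "A$1$2 = 0" "A$3$2 = 0" "A$1$3 = 0" "A$2$3 = 0"
    using \<mu> by auto
  have "1 = \<mu> d * A$1$1" "1 = \<mu> d * A$2$2" "1 = \<mu> d * A$3$3"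
    using Ac[rule_format, of d] diag by (simp_all add: eqs)
  then have "A$2$2 = A$1$1" "A$3$3 = A$1$1" by (metis mult_left_cancel \<mu>)+
  moreover have "1 = \<mu> e * A$1$1" "s' = \<mu> e * (A$2$2 * s)" "t' = \<mu> e * (A$3$3 * t)"
    using Ac[rule_format, of e] diag by (simp_all add: eqs)
  ultimately show ?thesis by (simp add: mult.assoc[symmetric])
qed

lemma ex_proj_equiv_std_config:
  assumes "gen_pos (v::'k::field^3^5)"
  shows "\<exists>s t. proj_equiv v (std_config s t)"
proof -
  have G: "\<And>i j l. i \<noteq> j \<Longrightarrow> j \<noteq> l \<Longrightarrow> i \<noteq> l \<Longrightarrow> det3 (v$i) (v$j) (v$l) \<noteq> 0"
    using assms unfolding gen_pos_iff_det3 by blast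
  define u0 u1 u2 u3 u4 where "u0 = v$a" "u1 = v$b" "u2 = v$c" "u3 = v$d" "u4 = v$e"
  define D where "D = det3 u0 u1 u2"
  define l1 l2 l3 where "l1 = det3 u3 u1 u2" "l2 = det3 u0 u3 u2" "l3 = det3 u0 u1 u3"
  define m1 m2 m3 where "m1 = det3 u4 u1 u2" "m2 = det3 u0 u4 u2" "m3 = det3 u0 u1 u4"
  have nz: "D \<noteq> 0" "l1 \<noteq> 0" "l2 \<noteq> 0" "l3 \<noteq> 0" "m1 \<noteq> 0"
    unfolding D_def l1_l2_l3_def m1_m2_m3_def u0_u1_u2_u3_u4_def
    using G distinct by auto
  \<comment> \<open>By Cramer's rule \<open>A\<close> maps \<open>u0, u1, u2\<close> to multiples of the unit vectors and \<open>u3\<close>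
    to \<open>(1,1,1)\<close>.\<close>
  define A :: "'k^3^3" where
    "A = vector [(1/l1) *s cross_prod u1 u2, (1/l2) *s cross_prod u2 u0, (1/l3) *s cross_prod u0 u1]"
  have Ax: "A *v x = vector [det3 x u1 u2 / l1, det3 u0 x u2 / l2, det3 u0 u1 x / l3]" for x
    unfolding A_def
    by (simp add: vec3_eq_iff matrix_vector_mult_3 cross_prod_def det3_def divide_inverse algebra_simps)
  have "det A = D\<^sup>2 / (l1 * l2 * l3)"
    unfolding A_def det_vector_scale det3_cross_prod D_def by simp
  then have "invertible A" using nz by (simp add: invertible_det_nz)
  define s t where "s = (l1/m1) * (m2/l2)" "t = (l1/m1) * (m3/l3)"
  define \<mu> :: "5 \<Rightarrow> 'k" where "\<mu> i = (if i = a then l1/D else if i = b then l2/D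
       else if i = c then l3/D else if i = d then 1 else l1/m1)" for i
  have "\<forall>i. \<mu> i \<noteq> 0" unfolding \<mu>_def using nz by auto
  moreover have "std_config s t $ i = \<mu> i *s (A *v (v $ i))" for i
    using exhaust[of i] points_neq
    by (elim disjE; simp add: Ax std_config_nth vec3_eq_iff \<mu>_def u0_u1_u2_u3_u4_def[symmetric]
        det3_repeated D_def[symmetric] l1_l2_l3_def[symmetric] m1_m2_m3_def[symmetric];
        simp add: s_t_def nz field_simps)
  ultimately show ?thesis unfolding proj_equiv_def using \<open>invertible A\<close> by blast
qed

end

section \<open>Normal forms fixed by the twisted Frobenius\<close>

locale five_cycle_char_power = five_cycle a b c d e \<sigma> + char_power field q
  for a b c d e \<sigma> and field :: "'k::field itself" and q
begin

lemma frob_fixed_std_configD: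
  assumes "proj_equiv (std_config s t) (frob_perm q \<sigma> (std_config s t :: 'k^3^5))"
  shows "t = 1 - s ^ q \<and> s ^ (q\<^sup>2 + 1) + s ^ q - 1 = 0"
proof -
  obtain A \<mu> where \<mu>: "\<forall>i. \<mu> i \<noteq> (0::'k)"
    and Ac: "\<forall>i. frob_perm q \<sigma> (std_config s t) $ i = \<mu> i *s (A *v (std_config s t $ i))"
    using assms unfolding proj_equiv_def by blast
  note eqs = frob_perm_nth cycle std_config_nth frob_vec_vector vec3_eq_iff
    matrix_vector_mult_3 q_pos zero_power
  have abc: "0 = \<mu> a * A$1$1" "1 = \<mu> a * A$2$1" "0 = \<mu> a * A$3$1"
       "0 = \<mu> b * A$1$2" "0 = \<mu> b * A$2$2" "1 = \<mu> b * A$3$2"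
       "1 = \<mu> c * A$1$3" "1 = \<mu> c * A$2$3" "1 = \<mu> c * A$3$3"
    using Ac[rule_format, of a] Ac[rule_format, of b] Ac[rule_format, of c] by (simp_all add: eqs)
  then have zero: "A$1$1 = 0" "A$3$1 = 0" "A$1$2 = 0" "A$2$2 = 0" using \<mu> by auto
  have col3: "A$2$3 = A$1$3" "A$3$3 = A$1$3" using abc(7-9) \<mu> by (metis mult_left_cancel)+
  have Ad: "1 = \<mu> d * A$1$3" "s^q = \<mu> d * (A$2$1 + A$1$3)" "t^q = \<mu> d * (A$3$2 + A$1$3)"
    using Ac[rule_format, of d] zero col3 by (simp_all add: eqs)
  have Ae: "A$2$1 = - (A$1$3 * t)" "A$3$2 * s = - (A$1$3 * t)"
    using Ac[rule_format, of e] zero col3 \<mu> by (simp_all add: eqs eq_neg_iff_add_eq_0)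
  have t: "t = 1 - s^q"
    using Ad(1,2) Ae(1) by (simp add: algebra_simps)
  have "s * t^q = \<mu> d * (A$3$2 * s) + \<mu> d * A$1$3 * s"
    using Ad(3) by (simp add: algebra_simps)
  also have "\<dots> = s - t"
    using Ad(1) Ae(2) by (simp add: algebra_simps)
  finally have "s * t^q = s - t" .
  moreover have "t^q = 1 - s^(q\<^sup>2)"
    unfolding t frob_diff by (simp add: power_mult[symmetric] power2_eq_square)
  ultimately have "s * (1 - s^(q\<^sup>2)) = s - (1 - s^q)" by (simp only: t)
  then have "s^(q\<^sup>2 + 1) + s^q - 1 = 0" by (simp add: algebra_simps)
  with t show ?thesis by simp
qed

lemma frob_root_nonzero:
  assumes "y ^ (q\<^sup>2 + 1) + y ^ q - 1 = (0::'k)"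
  shows "y \<noteq> 0" "1 - y ^ q \<noteq> 0"
  using assms q_pos by (auto simp: zero_power power_Suc2)

lemma frob_fixed_std_configI:
  assumes y: "y ^ (q\<^sup>2 + 1) + y ^ q - 1 = (0::'k)"
  shows "proj_equiv (std_config y (1 - y ^ q)) (frob_perm q \<sigma> (std_config y (1 - y ^ q)))"
proof -
  define t where "t = 1 - y ^ q"
  have y0: "y \<noteq> 0" and t0: "t \<noteq> 0" using frob_root_nonzero[OF y] t_def by auto
  have t_add: "t + y ^ q = 1" using t_def by simp
  have "t^q = 1 - y^(q\<^sup>2)" unfolding t_def frob_diff
    by (simp add: power_mult[symmetric] power2_eq_square)
  moreover have "y * y^(q\<^sup>2) = t" using y unfolding t_def by (simp add: algebra_simps)
  ultimately have tq: "t^q = 1 - t / y" using y0 by (simp add: eq_divide_eq mult.commute)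
  \<comment> \<open>The transformation forced by the equations solved in \<open>frob_fixed_std_configD\<close>\<close>
  define A :: "'k^3^3" where "A = vector [vector [0,0,1], vector [-t,0,1], vector [0, -t/y, 1]]"
  define \<mu> :: "5 \<Rightarrow> 'k" where "\<mu> i = (if i = a then -1/t else if i = b then -y/t
       else if i = e then 1/t else 1)" for i
  have "det A = t * t / y" unfolding A_def by (simp add: det_3 field_simps)
  then have "invertible A" using t0 y0 by (simp add: invertible_det_nz)
  moreover have "\<forall>i. \<mu> i \<noteq> 0" unfolding \<mu>_def using t0 y0 by auto
  moreover have "frob_perm q \<sigma> (std_config y t) $ i = \<mu> i *s (A *v (std_config y t $ i))" for i
    using exhaust[of i] points_neq t0 y0 tq t_add
    by (elim disjE)
       (simp_all add: frob_perm_nth cycle std_config_nth frob_vec_vector q_pos zero_power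
          vec3_eq_iff matrix_vector_mult_3 A_def \<mu>_def field_simps)
  ultimately show ?thesis unfolding proj_equiv_def t_def by blast
qed

lemma gen_pos_std_config_root:
  assumes y: "y ^ (q\<^sup>2 + 1) + y ^ q - 1 = (0::'k)"
  shows "gen_pos (std_config y (1 - y ^ q))"
proof (rule gen_pos_std_config)
  show "y \<noteq> 0" "1 - y ^ q \<noteq> 0" using frob_root_nonzero[OF y] .
  then show "y \<noteq> 1" "1 - y ^ q \<noteq> 1" using y q_pos by auto
  show "y \<noteq> 1 - y ^ q"
  proof
    assume y_eq: "y = 1 - y ^ q"
    then have yq: "y ^ q = 1 - y" by (simp add: algebra_simps)
    then have "(y ^ q) ^ q = y" using y_eq by (simp add: frob_diff)
    then have yy: "y ^ (q\<^sup>2 + 1) = y * y" by (simp add: power_mult[symmetric] power2_eq_square)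
    have "y * (y - 1) = y ^ (q\<^sup>2 + 1) + y ^ q - 1" unfolding yy yq by (simp add: algebra_simps)
    then show False using y \<open>y \<noteq> 0\<close> \<open>y \<noteq> 1\<close> by simp
  qed
qed

definition root_class :: "'k \<Rightarrow> ('k^3^5) set" where
  "root_class y = pgl_rel `` {std_config y (1 - y ^ q)}"

lemma std_config_root_in_configs:
  "y \<in> frob_roots \<Longrightarrow> std_config y (1 - y ^ q) \<in> (configs :: ('k^3^5) set)"
  using gen_pos_std_config_root by (simp add: frob_roots_def configs_def)

lemma P5_fixed_eq_root_classes: "P5_fixed q \<sigma> = root_class ` frob_roots"
proof
  have E: "equiv configs (pgl_rel :: (('k^3^5) \<times> _) set)" by (rule equiv_pgl_rel)
  show "P5_fixed q \<sigma> \<subseteq> root_class ` frob_roots"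
  proof
    fix X assume "X \<in> (P5_fixed q \<sigma> :: ('k^3^5) set set)"
    then obtain v where X: "X = pgl_rel``{v}" and v: "v \<in> configs"
      and fixed: "(v, frob_perm q \<sigma> v) \<in> pgl_rel"
      unfolding P5_fixed_eq[OF inj_\<sigma>] by blast
    obtain s t where "proj_equiv v (std_config s t)"
      using ex_proj_equiv_std_config[of v] v by (auto simp: configs_def)
    then have vn: "(v, std_config s t) \<in> pgl_rel" using v by (simp add: pgl_rel_iff configs_def)
    have "(std_config s t, v) \<in> pgl_rel" using E vn unfolding equiv_def by (blast dest: symD)
    then have "(std_config s t, frob_perm q \<sigma> (std_config s t)) \<in> pgl_rel"
      using fixed pgl_rel_frob_perm[OF inj_\<sigma> vn] E unfolding equiv_def by (meson transD)
    then have "t = 1 - s ^ q" "s \<in> frob_roots"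
      using frob_fixed_std_configD by (auto simp: pgl_rel_iff frob_roots_def)
    moreover have "X = pgl_rel``{std_config s t}" unfolding X using E vn by (rule equiv_class_eq)
    ultimately show "X \<in> root_class ` frob_roots" unfolding root_class_def by blast
  qed
next
  show "root_class ` frob_roots \<subseteq> P5_fixed q \<sigma>"
  proof (rule image_subsetI)
    fix y assume "y \<in> frob_roots"
    then have "(std_config y (1 - y ^ q), frob_perm q \<sigma> (std_config y (1 - y ^ q))) \<in> pgl_rel"
      using gen_pos_std_config_root frob_fixed_std_configI
      by (simp add: pgl_rel_iff frob_roots_def)
    then show "root_class y \<in> P5_fixed q \<sigma>"
      unfolding P5_fixed_eq[OF inj_\<sigma>] root_class_def
      using std_config_root_in_configs[OF \<open>y \<in> frob_roots\<close>] by blast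
  qed
qed

lemma inj_on_root_class: "inj_on root_class frob_roots"
proof (rule inj_onI)
  fix y y' assume "y \<in> frob_roots" "y' \<in> frob_roots" and eq: "root_class y = root_class y'"
  have "(std_config y (1 - y ^ q), std_config y' (1 - y' ^ q) :: 'k^3^5) \<in> pgl_rel"
    using eq[unfolded root_class_def] equiv_pgl_rel
      std_config_root_in_configs[OF \<open>y' \<in> frob_roots\<close>] by (rule eq_equiv_class)
  then have "proj_equiv (std_config y (1 - y ^ q)) (std_config y' (1 - y' ^ q) :: 'k^3^5)"
    by (simp add: pgl_rel_iff)
  then show "y = y'" using std_config_unique by blast
qed

lemma card_P5_fixed:
  assumes alg_closed: "\<forall>g :: 'k poly. degree g > 0 \<longrightarrow> (\<exists>x. poly g x = 0)"
  shows "card (P5_fixed q \<sigma> :: ('k^3^5) set set) = q\<^sup>2 + 1"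
  using card_frob_roots[OF alg_closed] inj_on_root_class
  by (simp add: P5_fixed_eq_root_classes card_image)

end

lemma five_cycle_cycle_of_list:
  assumes "distinct cs" and "length cs = 5"
  shows "five_cycle (cs!0) (cs!1) (cs!2) (cs!3) (cs!4) (cycle_of_list cs)"
proof -
  obtain a b c d e where cs: "cs = [a, b, c, d, e]"
    using assms(2) by (auto simp: numeral_eq_Suc length_Suc_conv)
  have "set cs = UNIV"
    using assms by (intro card_subset_eq) (auto simp: distinct_card)
  then show ?thesis
    using assms(1) unfolding cs by unfold_locales auto
qed

theorem mainTheorem6:
  fixes p n q :: nat and \<sigma> :: "5 \<Rightarrow> 5" and cs :: "5 list"
  assumes "prime p" and "n \<ge> 1" and "q = p ^ n"
    and "CHAR('k::field) = p"
    and "\<forall>f :: 'k poly. degree f > 0 \<longrightarrow> (\<exists>x. poly f x = 0)"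
    and "\<forall>x :: 'k. \<exists>m>0. x ^ (p ^ m) = x"
    and "distinct cs" and "length cs = 5" and "\<sigma> = cycle_of_list cs"
  shows "card (P5_fixed q \<sigma> :: ('k^3^5) set set) = q ^ 2 + 1"
proof -
  have "char_power TYPE('k) q"
    using assms(1-4) by unfold_locales auto
  moreover have "five_cycle (cs!0) (cs!1) (cs!2) (cs!3) (cs!4) \<sigma>"
    unfolding assms(9) using assms(7,8) by (rule five_cycle_cycle_of_list)
  ultimately show ?thesis
    using five_cycle_char_power.card_P5_fixed five_cycle_char_power.intro assms(5) by blast
qed

end
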